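(* Let $G=(V,E)$ be a finite graph with adjacency matrix $A$, and suppose there exist $\boldsymbol\beta,\boldsymbol\gamma,\boldsymbol\lambda\in(0,\infty)^V$ such that every induced subgraph $H$ of $G$ has local $(\boldsymbol\beta|_{V(H)},\boldsymbol\gamma|_{V(H)},\boldsymbol\lambda|_{V(H)})$-occupancy. Let $B=\mathrm{diag}(\boldsymbol\beta)$ and $\Gamma=\mathrm{diag}(\boldsymbol\gamma)$. Then every vector $\mathbf q\in\mathbb R^V$ with $\mathbf q\ge\mathbf 0$ and $(B+\Gamma A)\mathbf q\le\mathbf 1$ lies in the independence polytope $\mathrm{ind}(G)$.
   Context: The independence polytope $\mathrm{ind}(G)\subset\mathbb R^V$ is the convex hull of the indicator vectors $\mathbf x^I\in\{0,1\}^V$ of independent sets $I$ of $G$ (including $\emptyset$). For a graph $H$ and $\boldsymbol\beta,\boldsymbol\gamma,\boldsymbol\lambda\in[0,\infty)^{V(H)}$, $H$ has local $(\boldsymbol\beta,\boldsymbol\gamma,\boldsymbol\lambda)$-occupancy if for every $u\in V(H)$, $\beta_u\Pr_{H,\boldsymbol\lambda}(u\in X)+\gamma_u\sum_{v\in N_H(u)}\Pr_{H,\boldsymbol\lambda}(v\in X)\ge1$, where $X$ is drawn from the hard-core model on $H$: $\Pr_{H,\boldsymbol\lambda}(I)\propto\prod_{v\in I}\lambda_v$ over independent sets $I$ of $H$. Vector inequalities are entrywise. *)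

theory Defs
  imports "HOL-Analysis.Analysis"
begin

text \<open>A finite simple graph G has vertex set the finite type 'n (so R^V = real^'n)
  and a symmetric irreflexive adjacency relation E.\<close>

definition independent_set :: "('n \<Rightarrow> 'n \<Rightarrow> bool) \<Rightarrow> 'n set \<Rightarrow> bool" where
  "independent_set E I \<longleftrightarrow> (\<forall>u\<in>I. \<forall>v\<in>I. \<not> E u v)"

definition indicator_vec :: "'n set \<Rightarrow> real^'n::finite" where
  "indicator_vec I = (\<chi> v. if v \<in> I then 1 else 0)"

definition ind_polytope :: "('n::finite \<Rightarrow> 'n \<Rightarrow> bool) \<Rightarrow> (real^'n) set" where
  "ind_polytope E = convex hull {indicator_vec I | I. independent_set E I}"

definition adj_matrix :: "('n::finite \<Rightarrow> 'n \<Rightarrow> bool) \<Rightarrow> real^'n^'n" where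
  "adj_matrix E = (\<chi> i j. if E i j then 1 else 0)"

definition diag_mat :: "real^'n::finite \<Rightarrow> real^'n^'n" where
  "diag_mat d = (\<chi> i j. if i = j then d $ i else 0)"

text \<open>Hard-core model on the induced subgraph H = G[S] with activities lam:
  weight of an independent set I \<subseteq> S is prod of lam over I.\<close>
definition hc_weight :: "('n \<Rightarrow> real) \<Rightarrow> 'n set \<Rightarrow> real" where
  "hc_weight lam I = (\<Prod>v\<in>I. lam v)"

definition hc_partition :: "('n \<Rightarrow> 'n \<Rightarrow> bool) \<Rightarrow> 'n set \<Rightarrow> ('n \<Rightarrow> real) \<Rightarrow> real" where
  "hc_partition E S lam = (\<Sum>I\<in>{I. I \<subseteq> S \<and> independent_set E I}. hc_weight lam I)"

definition hc_occ_prob :: "('n \<Rightarrow> 'n \<Rightarrow> bool) \<Rightarrow> 'n set \<Rightarrow> ('n \<Rightarrow> real) \<Rightarrow> 'n \<Rightarrow> real" where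
  "hc_occ_prob E S lam u =
     (\<Sum>I\<in>{I. I \<subseteq> S \<and> independent_set E I \<and> u \<in> I}. hc_weight lam I) / hc_partition E S lam"

definition local_occupancy ::
  "('n \<Rightarrow> 'n \<Rightarrow> bool) \<Rightarrow> 'n set \<Rightarrow> ('n \<Rightarrow> real) \<Rightarrow> ('n \<Rightarrow> real) \<Rightarrow> ('n \<Rightarrow> real) \<Rightarrow> bool" where
  "local_occupancy E S beta gamma lam \<longleftrightarrow>
     (\<forall>u\<in>S. beta u * hc_occ_prob E S lam u
              + gamma u * (\<Sum>v\<in>{v\<in>S. E u v}. hc_occ_prob E S lam v) \<ge> 1)"

end

theory Submission
  imports Defs
begin

(* Water filling. Start from c = 0 and let S be the set of coordinates with c_v < q_v. The
   occupancy vector p of the hard-core model on G[S] lies in ind(G), is positive exactly on S,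
   and by local occupancy raises every row u \<in> S of M c (M = B + \<Gamma>A) by at least 1 per unit
   of time. Move c along p until some coordinate saturates, then recurse on the smaller S.
   Every step raises a row that ends at (M q)_u \<le> 1, so the total time spent is at most 1;
   hence q is a convex combination of occupancy vectors and 0, all of which lie in ind(G). *)

definition covering_direction :: "real^'n^'n \<Rightarrow> 'n set \<Rightarrow> real^'n::finite \<Rightarrow> bool" where
  "covering_direction M S p \<longleftrightarrow>
     (\<forall>v\<in>S. 0 < p $ v) \<and> (\<forall>v. v \<notin> S \<longrightarrow> p $ v = 0) \<and>
     (\<forall>u\<in>S. 1 \<le> (M *v p) $ u)"

lemma matrix_vector_mult_mono:
  fixes M :: "real^'n::finite^'m"
  assumes "0 \<le> M" "x \<le> y"
  shows "M *v x \<le> M *v y"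
  using assms by (auto simp: less_eq_vec_def matrix_vector_mult_def intro!: sum_mono mult_left_mono)

lemma convex_scaleR_add_mem:
  assumes "convex P" "y \<in> P" "z \<in> P" "0 \<le> a" "0 \<le> b"
  shows "a *\<^sub>R y + b *\<^sub>R z \<in> (*\<^sub>R) (a + b) ` P"
proof (cases "a + b = 0")
  case True
  with assms have "a = 0" "b = 0" by auto
  with assms show ?thesis by (auto intro: image_eqI[of _ _ y])
next
  case False
  with assms have "0 < a + b" by simp
  let ?w = "(a / (a + b)) *\<^sub>R y + (b / (a + b)) *\<^sub>R z"
  have "?w \<in> P"
    using assms \<open>0 < a + b\<close> by (intro convexD) (auto simp: add_divide_distrib[symmetric])
  moreover have "a *\<^sub>R y + b *\<^sub>R z = (a + b) *\<^sub>R ?w"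
    using \<open>0 < a + b\<close> by (simp add: scaleR_add_right)
  ultimately show ?thesis by blast
qed

lemma saturating_step:
  fixes c p q :: "real^'n::finite"
  assumes "S \<noteq> {}" "\<forall>v\<in>S. 0 < p $ v" "\<forall>v. v \<notin> S \<longrightarrow> p $ v = 0" "c \<le> q"
  obtains t v\<^sub>0
  where "0 \<le> t" "v\<^sub>0 \<in> S" "c + t *\<^sub>R p \<le> q" "(c + t *\<^sub>R p) $ v\<^sub>0 = q $ v\<^sub>0"
proof -
  define slack where "slack v = (q $ v - c $ v) / p $ v" for v
  obtain v\<^sub>0 where "v\<^sub>0 \<in> S" and min: "Min (slack ` S) = slack v\<^sub>0"
    using obtains_MIN[of S slack] assms(1) by auto
  have "0 < p $ v\<^sub>0" using assms(2) \<open>v\<^sub>0 \<in> S\<close> by blast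
  then have "0 \<le> slack v\<^sub>0" using assms(4) by (simp add: slack_def less_eq_vec_def)
  moreover have "c + slack v\<^sub>0 *\<^sub>R p \<le> q"
    unfolding less_eq_vec_def
  proof
    fix v
    show "(c + slack v\<^sub>0 *\<^sub>R p) $ v \<le> q $ v"
    proof (cases "v \<in> S")
      case True
      then have "0 < p $ v" using assms(2) by blast
      have "slack v\<^sub>0 * p $ v \<le> slack v * p $ v"
        using min[symmetric] True \<open>0 < p $ v\<close> by (intro mult_right_mono) auto
      also have "\<dots> = q $ v - c $ v" using \<open>0 < p $ v\<close> by (simp add: slack_def)
      finally show ?thesis by simp
    next
      case False
      with assms(3,4) show ?thesis by (simp add: less_eq_vec_def)
    qed
  qed
  moreover have "(c + slack v\<^sub>0 *\<^sub>R p) $ v\<^sub>0 = q $ v\<^sub>0"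
    using \<open>0 < p $ v\<^sub>0\<close> by (simp add: slack_def)
  ultimately show thesis using that \<open>v\<^sub>0 \<in> S\<close> by blast
qed

(* (c, T) is an intermediate state: coordinates outside S are saturated, and the rows of M c
   indexed by S have reached level T. *)
lemma water_filling:
  fixes M :: "real^'n::finite^'n"
  assumes P: "convex P" "0 \<in> P"
    and M: "0 \<le> M" "M *v q \<le> 1"
    and directions: "\<And>S. \<exists>p\<in>P. covering_direction M S p"
    and "c \<le> q" "\<forall>v. v \<notin> S \<longrightarrow> c $ v = q $ v" "\<forall>u\<in>S. T \<le> (M *v c) $ u" "T \<le> 1"
  shows "q - c \<in> (*\<^sub>R) (1 - T) ` P"
  using finite[of S] assms(6-9)
proof (induction S arbitrary: c T rule: finite_psubset_induct)
  case (psubset S)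
  show ?case
  proof (cases "S = {}")
    case True
    with psubset.prems have "c = q" by (simp add: vec_eq_iff)
    with P show ?thesis by (auto intro: image_eqI[of _ _ 0])
  next
    case False
    obtain p where "p \<in> P" and p: "covering_direction M S p"
      using directions by blast
    obtain t v\<^sub>0
      where t: "0 \<le> t" "v\<^sub>0 \<in> S" "c + t *\<^sub>R p \<le> q" "(c + t *\<^sub>R p) $ v\<^sub>0 = q $ v\<^sub>0"
      using saturating_step[OF False _ _ \<open>c \<le> q\<close>] p unfolding covering_direction_def by blast
    define c' where "c' = c + t *\<^sub>R p"
    define S' where "S' = {v\<in>S. c' $ v < q $ v}"
    have "v\<^sub>0 \<notin> S'" using t(4) by (simp add: S'_def c'_def)
    with t(2) have "S' \<subset> S" by (auto simp: S'_def)
    have c'_outside: "\<forall>v. v \<notin> S' \<longrightarrow> c' $ v = q $ v"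
      using psubset.prems(2) p t(3)
      by (auto simp: S'_def c'_def covering_direction_def less_eq_vec_def intro: order.antisym)
    have raised: "T + t \<le> (M *v c') $ u" if "u \<in> S" for u
    proof -
      have "T + t * 1 \<le> (M *v c) $ u + t * (M *v p) $ u"
        using psubset.prems(3) p that t(1)
        by (intro add_mono mult_left_mono) (auto simp: covering_direction_def)
      then show ?thesis by (simp add: c'_def algebra_simps)
    qed
    have "T + t \<le> (M *v c') $ v\<^sub>0" using raised[OF t(2)] .
    also have "\<dots> \<le> (M *v q) $ v\<^sub>0"
      using matrix_vector_mult_mono[OF M(1) t(3)] by (simp add: c'_def less_eq_vec_def)
    also have "\<dots> \<le> 1" using M(2) by (simp add: less_eq_vec_def)
    finally have "T + t \<le> 1" .
    then obtain y where "y \<in> P" "q - c' = (1 - (T + t)) *\<^sub>R y"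
      using psubset.IH[OF \<open>S' \<subset> S\<close>, of c' "T + t"] t(3) c'_outside raised
      by (auto simp: c'_def S'_def)
    then have "q - c = (1 - (T + t)) *\<^sub>R y + t *\<^sub>R p" by (simp add: c'_def algebra_simps)
    also have "\<dots> \<in> (*\<^sub>R) (1 - T) ` P"
      using convex_scaleR_add_mem[OF P(1) \<open>y \<in> P\<close> \<open>p \<in> P\<close>, of "1 - (T + t)" t]
        \<open>T + t \<le> 1\<close> t(1)
      by simp
    finally show ?thesis .
  qed
qed

lemma mem_convex_if_covering_directions:
  fixes M :: "real^'n::finite^'n"
  assumes "convex P" "0 \<in> P" "0 \<le> M"
    and "\<And>S. \<exists>p\<in>P. covering_direction M S p"
    and "0 \<le> q" "M *v q \<le> 1"
  shows "q \<in> P"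
  using water_filling[OF assms(1,2,3,6,4), of 0 UNIV 0] assms(5) by simp

lemma convex_ind_polytope: "convex (ind_polytope E)"
  unfolding ind_polytope_def by (rule convex_convex_hull)

lemma zero_in_ind_polytope: "0 \<in> ind_polytope E"
proof -
  have "indicator_vec {} = 0" by (simp add: indicator_vec_def vec_eq_iff)
  moreover have "independent_set E {}" by (simp add: independent_set_def)
  ultimately show ?thesis
    unfolding ind_polytope_def by (metis (mono_tags, lifting) hull_inc mem_Collect_eq)
qed

abbreviation occupancy_matrix :: "real^'n \<Rightarrow> real^'n \<Rightarrow> ('n \<Rightarrow> 'n \<Rightarrow> bool) \<Rightarrow> real^'n^'n::finite"
  where "occupancy_matrix beta gamma E \<equiv> diag_mat beta + diag_mat gamma ** adj_matrix E"

lemma occupancy_matrix_entry: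
  "occupancy_matrix beta gamma E $ u $ v
     = (if u = v then beta $ u else 0) + (if E u v then gamma $ u else 0)"
proof -
  have "(\<Sum>k\<in>UNIV. (if u = k then gamma $ u else 0) * (if E k v then 1 else 0))
      = (\<Sum>k\<in>UNIV. if u = k then (if E u v then gamma $ u else 0) else 0)"
    by (rule sum.cong) auto
  then show ?thesis by (simp add: matrix_matrix_mult_def diag_mat_def adj_matrix_def)
qed

lemma occupancy_matrix_component:
  "(occupancy_matrix beta gamma E *v x) $ u
     = beta $ u * x $ u + gamma $ u * (\<Sum>v | E u v. x $ v)"
  unfolding matrix_vector_mult_def vec_lambda_beta occupancy_matrix_entry
  by (simp add: distrib_right sum.distrib if_distrib[of "\<lambda>z. z * _"] sum.If_cases sum_distrib_left)

lemma occupancy_matrix_nonneg: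
  "0 \<le> beta \<Longrightarrow> 0 \<le> gamma \<Longrightarrow> 0 \<le> occupancy_matrix beta gamma E"
  unfolding less_eq_vec_def zero_index occupancy_matrix_entry by simp

lemma hc_weight_nonneg: "(\<And>v. v \<in> I \<Longrightarrow> 0 \<le> lam v) \<Longrightarrow> 0 \<le> hc_weight lam I"
  unfolding hc_weight_def by (rule prod_nonneg) simp

lemma hc_weight_pos: "(\<And>v. v \<in> I \<Longrightarrow> 0 < lam v) \<Longrightarrow> 0 < hc_weight lam I"
  unfolding hc_weight_def by (rule prod_pos) simp

lemma hc_partition_ge_one:
  fixes E :: "'n::finite \<Rightarrow> 'n \<Rightarrow> bool"
  assumes "\<And>v. 0 \<le> lam v"
  shows "1 \<le> hc_partition E S lam"
proof -
  have "hc_weight lam {} \<le> hc_partition E S lam"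
    unfolding hc_partition_def
    by (intro member_le_sum) (auto simp: independent_set_def intro: hc_weight_nonneg assms)
  then show ?thesis by (simp add: hc_weight_def)
qed

definition hc_occupancy ::
    "('n::finite \<Rightarrow> 'n \<Rightarrow> bool) \<Rightarrow> 'n set \<Rightarrow> ('n \<Rightarrow> real) \<Rightarrow> real^'n" where
  "hc_occupancy E S lam = (\<chi> v. hc_occ_prob E S lam v)"

lemma hc_occupancy_eq_sum:
  "hc_occupancy E S lam = (\<Sum>I | I \<subseteq> S \<and> independent_set E I.
      (hc_weight lam I / hc_partition E S lam) *\<^sub>R indicator_vec I)"
proof -
  have "(\<Sum>I | I \<subseteq> S \<and> independent_set E I.
           hc_weight lam I / hc_partition E S lam * (if v \<in> I then 1 else 0))
      = (\<Sum>I | I \<subseteq> S \<and> independent_set E I.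
           if v \<in> I then hc_weight lam I / hc_partition E S lam else 0)" for v
    by (rule sum.cong) auto
  also have "\<dots> v = hc_occ_prob E S lam v" for v
    by (simp add: sum.inter_filter[symmetric] hc_occ_prob_def sum_divide_distrib)
  finally show ?thesis
    by (simp add: hc_occupancy_def vec_eq_iff indicator_vec_def)
qed

lemma hc_occupancy_in_ind_polytope:
  fixes E :: "'n::finite \<Rightarrow> 'n \<Rightarrow> bool"
  assumes "\<And>v. 0 \<le> lam v"
  shows "hc_occupancy E S lam \<in> ind_polytope E"
  unfolding hc_occupancy_eq_sum ind_polytope_def
proof (rule convex_sum[OF finite convex_convex_hull])
  have Z: "1 \<le> hc_partition E S lam" using assms by (rule hc_partition_ge_one)
  then show "(\<Sum>I | I \<subseteq> S \<and> independent_set E I. hc_weight lam I / hc_partition E S lam) = 1"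
    by (simp add: sum_divide_distrib[symmetric] hc_partition_def)
  show "0 \<le> hc_weight lam I / hc_partition E S lam" for I
    using Z hc_weight_nonneg[of I lam] assms by simp
qed (auto intro: hull_inc)

lemma hc_occ_prob_pos:
  fixes E :: "'n::finite \<Rightarrow> 'n \<Rightarrow> bool"
  assumes "\<And>u. \<not> E u u" "\<And>v. 0 < lam v" "u \<in> S"
  shows "0 < hc_occ_prob E S lam u"
proof -
  have lam: "0 \<le> lam v" for v using assms(2) by (rule less_imp_le)
  have "0 < hc_weight lam {u}" using assms(2) by (rule hc_weight_pos)
  also have "\<dots> \<le> (\<Sum>I | I \<subseteq> S \<and> independent_set E I \<and> u \<in> I. hc_weight lam I)"
    using assms by (intro member_le_sum) (auto simp: independent_set_def intro: hc_weight_nonneg lam)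
  finally have "0 < (\<Sum>I | I \<subseteq> S \<and> independent_set E I \<and> u \<in> I. hc_weight lam I)" .
  moreover have "1 \<le> hc_partition E S lam" using lam by (rule hc_partition_ge_one)
  ultimately show ?thesis by (simp add: hc_occ_prob_def)
qed

lemma hc_occ_prob_outside: "u \<notin> S \<Longrightarrow> hc_occ_prob E S lam u = 0"
  unfolding hc_occ_prob_def by (auto intro: sum.neutral)

lemma hc_occupancy_covering_direction:
  fixes E :: "'n::finite \<Rightarrow> 'n \<Rightarrow> bool"
  assumes "\<And>u. \<not> E u u" "\<And>v. 0 < lam $ v"
    and "local_occupancy E S (($) beta) (($) gamma) (($) lam)"
  shows "covering_direction (occupancy_matrix beta gamma E) S (hc_occupancy E S (($) lam))"
proof -
  have "(\<Sum>v | E u v. hc_occ_prob E S (($) lam) v)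
      = (\<Sum>v | v \<in> S \<and> E u v. hc_occ_prob E S (($) lam) v)" for u
    by (rule sum.mono_neutral_right) (auto intro!: hc_occ_prob_outside)
  then show ?thesis
    using assms hc_occ_prob_pos[where E = E, OF assms(1,2)]
    by (simp add: covering_direction_def hc_occupancy_def occupancy_matrix_component
        hc_occ_prob_outside local_occupancy_def)
qed

theorem theorem5p1:
  fixes E :: "'n::finite \<Rightarrow> 'n \<Rightarrow> bool"
    and beta gamma lam :: "real^'n"
  assumes sym: "\<And>u v. E u v \<Longrightarrow> E v u"
    and irrefl: "\<And>u. \<not> E u u"
    and pos: "\<And>v. beta $ v > 0" "\<And>v. gamma $ v > 0" "\<And>v. lam $ v > 0"
    and occ: "\<And>S. local_occupancy E S (\<lambda>v. beta $ v) (\<lambda>v. gamma $ v) (\<lambda>v. lam $ v)"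
    and q_nonneg: "\<And>v. q $ v \<ge> 0"
    and q_le: "\<And>v. ((diag_mat beta + diag_mat gamma ** adj_matrix E) *v q) $ v \<le> 1"
  shows "q \<in> ind_polytope E"
proof (rule mem_convex_if_covering_directions[OF convex_ind_polytope zero_in_ind_polytope])
  show "0 \<le> occupancy_matrix beta gamma E"
    using pos(1,2) by (intro occupancy_matrix_nonneg) (simp_all add: less_eq_vec_def less_imp_le)
  show "\<exists>p\<in>ind_polytope E. covering_direction (occupancy_matrix beta gamma E) S p" for S
    using hc_occupancy_in_ind_polytope hc_occupancy_covering_direction[OF irrefl pos(3) occ] pos(3)
    by (meson less_imp_le)
  show "0 \<le> q" "occupancy_matrix beta gamma E *v q \<le> 1"
    using q_nonneg q_le by (simp_all add: less_eq_vec_def)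
qed

end
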